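(* Let $\mathbf{\Omega}\subset\mathbb{R}^n$ be compact with nonempty interior, let $f:\mathbf{\Omega}\to\mathbb{R}$ be continuous, and let $\lambda$ be a finite nonnegative Borel measure on $\mathbf{\Omega}$ whose support is exactly $\mathbf{\Omega}$. Let $\underline{f}=\min_{\mathbf{x}\in\mathbf{\Omega}}f(\mathbf{x})$ and $\overline{f}=\max_{\mathbf{x}\in\mathbf{\Omega}}f(\mathbf{x})$. Let $\#\lambda$ be the pushforward of $\lambda$ by $f$, with moments $\#\lambda_k=\int_{\mathbf{\Omega}} f(\mathbf{x})^k\,d\lambda(\mathbf{x})$, $k\in\mathbb{N}$. For $r\in\mathbb{N}$ let $\mathbf{H}_r(\#\lambda)$ be the $(r+1)\times(r+1)$ Hankel matrix with entries $\mathbf{H}_r(\#\lambda)(i,j)=\#\lambda_{i+j}$ and $\mathbf{H}_r(x;\#\lambda)$ the $(r+1)\times(r+1)$ Hankel matrix with entries $\mathbf{H}_r(x;\#\lambda)(i,j)=\#\lambda_{i+j+1}$, $i,j=0,\dots,r$, and define \[\tau^\ell_r=\sup_a\{a:\ \mathbf{H}_r(x;\#\lambda)\succeq a\,\mathbf{H}_r(\#\lambda)\},\qquad \tau^u_r=\inf_a\{a:\ a\,\mathbf{H}_r(\#\lambda)\succeq \mathbf{H}_r(x;\#\lambda)\}.\] Then $\underline{f}\le\tau^\ell_r\le\tau^u_r\le\overline{f}$ for all $r\in\mathbb{N}$; the sequence $(\tau^\ell_r)_{r\in\mathbb{N}}$ is monotone non-increasing and $(\tau^u_r)_{r\in\mathbb{N}}$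 is monotone non-decreasing; $\lim_{r\to\infty}\tau^\ell_r=\underline{f}$ and $\lim_{r\to\infty}\tau^u_r=\overline{f}$; and for all $r\in\mathbb{N}$, $\tau^\ell_r=\lambda_{\min}(\mathbf{H}_r(x;\#\lambda),\mathbf{H}_r(\#\lambda))$ and $\tau^u_r=\lambda_{\max}(\mathbf{H}_r(x;\#\lambda),\mathbf{H}_r(\#\lambda))$.
   Context: The pushforward measure is defined by $\#\lambda(C)=\lambda(f^{-1}(C))$ for Borel $C\subset\mathbb{R}$. $\mathbf{A}\succeq\mathbf{B}$ means $\mathbf{A}-\mathbf{B}$ is positive semidefinite. For real symmetric matrices $\mathbf{A},\mathbf{C}$, $\lambda_{\min}(\mathbf{A},\mathbf{C})$ (resp. $\lambda_{\max}(\mathbf{A},\mathbf{C})$) denotes the smallest (resp. largest) generalized eigenvalue of the pair, i.e. the smallest (resp. largest) scalar $\tau$ such that $\mathbf{A}\mathbf{v}=\tau\,\mathbf{C}\mathbf{v}$ for some nonzero vector $\mathbf{v}$. *)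

theory Defs
  imports "HOL-Analysis.Analysis"
begin

definition measure_support :: "'a::topological_space measure \<Rightarrow> 'a set \<Rightarrow> 'a set" where
  "measure_support M \<Omega> = {x \<in> \<Omega>. \<forall>U. open U \<and> x \<in> U \<longrightarrow> emeasure M (U \<inter> \<Omega>) > 0}"

definition push_moment :: "'a measure \<Rightarrow> ('a \<Rightarrow> real) \<Rightarrow> nat \<Rightarrow> real" where
  "push_moment M f k = (\<integral>x. f x ^ k \<partial>M)"

definition hankel0 :: "(nat \<Rightarrow> real) \<Rightarrow> nat \<Rightarrow> nat \<Rightarrow> real" where
  "hankel0 m i j = m (i + j)"

definition hankel1 :: "(nat \<Rightarrow> real) \<Rightarrow> nat \<Rightarrow> nat \<Rightarrow> real" where
  "hankel1 m i j = m (i + j + 1)"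

definition psd_mat :: "nat \<Rightarrow> (nat \<Rightarrow> nat \<Rightarrow> real) \<Rightarrow> bool" where
  "psd_mat n A \<longleftrightarrow> (\<forall>v::nat \<Rightarrow> real. 0 \<le> (\<Sum>i<n. \<Sum>j<n. v i * A i j * v j))"

definition gen_eigenvalues :: "nat \<Rightarrow> (nat \<Rightarrow> nat \<Rightarrow> real) \<Rightarrow> (nat \<Rightarrow> nat \<Rightarrow> real) \<Rightarrow> real set" where
  "gen_eigenvalues n A C = {t. \<exists>v::nat \<Rightarrow> real. (\<exists>i<n. v i \<noteq> 0) \<and>
      (\<forall>i<n. (\<Sum>j<n. A i j * v j) = t * (\<Sum>j<n. C i j * v j))}"

definition gen_eig_min :: "nat \<Rightarrow> (nat \<Rightarrow> nat \<Rightarrow> real) \<Rightarrow> (nat \<Rightarrow> nat \<Rightarrow> real) \<Rightarrow> real" where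
  "gen_eig_min n A C = Min (gen_eigenvalues n A C)"

definition gen_eig_max :: "nat \<Rightarrow> (nat \<Rightarrow> nat \<Rightarrow> real) \<Rightarrow> (nat \<Rightarrow> nat \<Rightarrow> real) \<Rightarrow> real" where
  "gen_eig_max n A C = Max (gen_eigenvalues n A C)"

definition tau_lower :: "(nat \<Rightarrow> real) \<Rightarrow> nat \<Rightarrow> real" where
  "tau_lower m r = Sup {a. psd_mat (r + 1) (\<lambda>i j. hankel1 m i j - a * hankel0 m i j)}"

definition tau_upper :: "(nat \<Rightarrow> real) \<Rightarrow> nat \<Rightarrow> real" where
  "tau_upper m r = Inf {a. psd_mat (r + 1) (\<lambda>i j. a * hankel0 m i j - hankel1 m i j)}"

end

theory Submission
  imports Defs "HOL-Library.Function_Algebras" "HOL-Computational_Algebra.Polynomial"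
begin

(* Write P_v(t) = v_0 + v_1 t + ... + v_r t^r. The quadratic form of H_r(x) - a H_r at v is the
   integral of (f - a) P_v(f)^2, so Inf f is feasible for tau^l_r, the (0,0) entry separates
   the feasible sets of tau^l_r and tau^u_r, and these sets shrink as r grows. For c > Inf f the
   weight (f - c) (b - f)^(2N) with b >= max f puts almost all its mass where f is close to its
   minimum, a set of positive measure because Omega is the support; so for large N the integral
   is negative and tau^l_r <= c. Everything about tau^u follows by replacing f with -f.
   When f takes more than r values, H_r is positive definite; then the supremum tau^l_r is
   attained by compactness, a kernel vector of H_r(x) - tau^l_r H_r is a generalized
   eigenvector, and the Rayleigh quotient shows that no generalized eigenvalue is smaller. *)

section \<open>Quadratic forms of matrices indexed by natural numbers\<close>

definition matrix_form :: "nat \<Rightarrow> (nat \<Rightarrow> nat \<Rightarrow> real) \<Rightarrow> (nat \<Rightarrow> real) \<Rightarrow> (nat \<Rightarrow> real) \<Rightarrow> real"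
  where "matrix_form n A u v = (\<Sum>i<n. \<Sum>j<n. u i * A i j * v j)"

lemma psd_mat_iff_matrix_form: "psd_mat n A \<longleftrightarrow> (\<forall>v. 0 \<le> matrix_form n A v v)"
  by (simp add: psd_mat_def matrix_form_def)

lemma matrix_form_row_sums: "matrix_form n A u v = (\<Sum>i<n. u i * (\<Sum>j<n. A i j * v j))"
  by (simp add: matrix_form_def sum_distrib_left mult.assoc)

lemma matrix_form_commute:
  assumes "\<And>i j. A i j = A j i"
  shows "matrix_form n A u v = matrix_form n A v u"
  unfolding matrix_form_def using assms by (subst sum.swap) (simp add: mult_ac)

lemma matrix_form_diff:
  "matrix_form n (\<lambda>i j. A i j - a * C i j) u v = matrix_form n A u v - a * matrix_form n C u v"
  by (simp add: matrix_form_def algebra_simps sum_subtractf sum_distrib_left)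

lemma matrix_form_scale:
  "matrix_form n A (\<lambda>i. c * u i) (\<lambda>i. c * u i) = c\<^sup>2 * matrix_form n A u u"
  by (simp add: matrix_form_def sum_distrib_left power2_eq_square mult_ac)

lemma matrix_form_add_scaled:
  "matrix_form n A (\<lambda>i. u i + t * w i) (\<lambda>i. u i + t * w i) =
    matrix_form n A u u + t * (matrix_form n A u w + matrix_form n A w u) + t\<^sup>2 * matrix_form n A w w"
  by (simp add: matrix_form_def algebra_simps power2_eq_square sum.distrib sum_distrib_left)

lemma matrix_form_cong:
  "(\<And>i. i < n \<Longrightarrow> u i = u' i) \<Longrightarrow> (\<And>i. i < n \<Longrightarrow> v i = v' i) \<Longrightarrow>
    matrix_form n A u v = matrix_form n A u' v'"
  by (simp add: matrix_form_def)

lemma matrix_form_vanishing: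
  "\<not> (\<exists>i<n. v i \<noteq> 0) \<Longrightarrow> matrix_form n A v v = 0"
  by (simp add: matrix_form_def)

lemma matrix_form_unit:
  assumes "k < n"
  shows "matrix_form n A (\<lambda>i. if i = k then 1 else 0) (\<lambda>i. if i = k then 1 else 0) = A k k"
  using assms
  by (simp add: matrix_form_def if_distrib[of "\<lambda>x. x * _"] if_distrib[of "\<lambda>x. _ * x"] cong: if_cong)

lemma matrix_form_sum_right:
  "matrix_form n A u (\<lambda>j. \<Sum>v\<in>S. c v * v j) = (\<Sum>v\<in>S. c v * matrix_form n A u v)"
  by (simp add: matrix_form_def sum_distrib_left sum.swap[of _ "{..<n}" S] mult_ac)

lemma matrix_form_zero_extend:
  "m \<le> n \<Longrightarrow>
    matrix_form n A (\<lambda>i. if i < m then v i else 0) (\<lambda>i. if i < m then v i else 0) = matrix_form m A v v"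
  unfolding matrix_form_def by (intro sum.mono_neutral_cong_right ballI) auto

lemma psd_mat_mono: "m \<le> n \<Longrightarrow> psd_mat n A \<Longrightarrow> psd_mat m A"
  by (metis psd_mat_iff_matrix_form matrix_form_zero_extend)

lemma psd_mat_diag_nonneg: "psd_mat n A \<Longrightarrow> k < n \<Longrightarrow> 0 \<le> A k k"
  by (metis psd_mat_iff_matrix_form matrix_form_unit)

lemma psd_mat_congruence_diag:
  "psd_mat n A \<Longrightarrow> psd_mat n (\<lambda>i j. d i * A i j * d j)"
  unfolding psd_mat_iff_matrix_form
proof
  fix v assume "\<forall>v. 0 \<le> matrix_form n A v v"
  then have "0 \<le> matrix_form n A (\<lambda>i. d i * v i) (\<lambda>i. d i * v i)" ..
  then show "0 \<le> matrix_form n (\<lambda>i j. d i * A i j * d j) v v"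
    by (simp add: matrix_form_def mult_ac)
qed

lemma psd_mat_congruence_sign:
  assumes "\<And>i. d i * d i = 1"
  shows "psd_mat n (\<lambda>i j. d i * A i j * d j) \<longleftrightarrow> psd_mat n A"
proof
  have "d i * (d i * A i j * d j) * d j = (d i * d i) * A i j * (d j * d j)" for i j
    by (simp add: mult_ac)
  then have "(\<lambda>i j. d i * (d i * A i j * d j) * d j) = A"
    using assms by (simp add: fun_eq_iff)
  moreover assume "psd_mat n (\<lambda>i j. d i * A i j * d j)"
  then have "psd_mat n (\<lambda>i j. d i * (d i * A i j * d j) * d j)"
    by (rule psd_mat_congruence_diag)
  ultimately show "psd_mat n A" by simp
qed (rule psd_mat_congruence_diag)


lemma nonneg_quadratic_imp_linear_coeff_zero:
  fixes b c :: real
  assumes "\<And>t. 0 \<le> t * b + t\<^sup>2 * c"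
  shows "b = 0"
proof -
  define G where "G = \<bar>c\<bar> + 1"
  have "G > 0" by (simp add: G_def add_nonneg_pos)
  have "0 \<le> (- b / G) * b + (- b / G)\<^sup>2 * c"
    by (rule assms)
  then have "0 \<le> G\<^sup>2 * ((- b / G) * b + (- b / G)\<^sup>2 * c)"
    by simp
  also have "\<dots> = b\<^sup>2 * (c - G)"
    using \<open>G > 0\<close> by (simp add: field_simps power2_eq_square)
  also have "\<dots> \<le> b\<^sup>2 * (- 1)"
    by (intro mult_left_mono) (auto simp: G_def)
  finally show "b = 0" by simp
qed

lemma psd_mat_null_vector:
  fixes A :: "nat \<Rightarrow> nat \<Rightarrow> real" and v :: "nat \<Rightarrow> real"
  assumes psd: "psd_mat n A" and A_sym: "\<And>i j. A i j = A j i"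
    and null: "matrix_form n A v v = 0"
  shows "\<forall>i<n. (\<Sum>j<n. A i j * v j) = 0"
proof -
  define w where "w i = (\<Sum>j<n. A i j * v j)" for i
  have Awv: "matrix_form n A w v = matrix_form n A v w"
    by (rule matrix_form_commute) (rule A_sym)
  have Avw: "matrix_form n A v w = (\<Sum>i<n. (w i)\<^sup>2)"
    using Awv by (simp add: matrix_form_row_sums w_def power2_eq_square)
  have "0 \<le> t * (2 * (\<Sum>i<n. (w i)\<^sup>2)) + t\<^sup>2 * matrix_form n A w w" for t
  proof -
    have "0 \<le> matrix_form n A (\<lambda>i. v i + t * w i) (\<lambda>i. v i + t * w i)"
      using psd by (simp add: psd_mat_iff_matrix_form)
    then show ?thesis by (simp add: matrix_form_add_scaled null Awv Avw)
  qed
  then have "(\<Sum>i<n. (w i)\<^sup>2) = 0"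
    using nonneg_quadratic_imp_linear_coeff_zero by fastforce
  then show ?thesis by (simp add: w_def sum_nonneg_eq_0_iff)
qed

lemma sum_fun_apply: "(\<Sum>x\<in>S. f x) i = (\<Sum>x\<in>S. f x i :: 'a :: comm_monoid_add)"
  by (induction S rule: infinite_finite_induct) auto

section \<open>Generalized eigenvalues of a definite pencil\<close>

lemma matrix_form_gen_eigenvector:
  assumes "\<forall>i<n. (\<Sum>j<n. A i j * v j) = t * (\<Sum>j<n. C i j * v j)"
  shows "matrix_form n A u v = t * matrix_form n C u v"
  using assms by (simp add: matrix_form_row_sums sum_distrib_left mult_ac)

lemma gen_eigenvalues_uminus_iff:
  "t \<in> gen_eigenvalues n (\<lambda>i j. - A i j) C \<longleftrightarrow> - t \<in> gen_eigenvalues n A C"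
proof -
  have "(\<Sum>j<n. - A i j * v j) = t * c \<longleftrightarrow> (\<Sum>j<n. A i j * v j) = - t * c" for i v c
    by (auto simp: sum_negf)
  then show ?thesis by (simp add: gen_eigenvalues_def)
qed

lemma gen_eigenvectors_orthogonal:
  assumes A_sym: "\<And>i j. A i j = A j i" and C_sym: "\<And>i j. C i j = C j i"
    and u: "\<forall>i<n. (\<Sum>j<n. A i j * u j) = t * (\<Sum>j<n. C i j * u j)"
    and w: "\<forall>i<n. (\<Sum>j<n. A i j * w j) = s * (\<Sum>j<n. C i j * w j)"
    and "t \<noteq> s"
  shows "matrix_form n C u w = 0"
proof -
  have "s * matrix_form n C u w = matrix_form n A u w"
    using matrix_form_gen_eigenvector[OF w] by simp
  also have "\<dots> = matrix_form n A w u"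
    by (rule matrix_form_commute) (rule A_sym)
  also have "\<dots> = t * matrix_form n C w u"
    by (rule matrix_form_gen_eigenvector[OF u])
  also have "matrix_form n C w u = matrix_form n C u w"
    by (rule matrix_form_commute) (rule C_sym)
  finally show ?thesis using \<open>t \<noteq> s\<close> by simp
qed

interpretation fun_vec: vector_space "\<lambda>c (v :: nat \<Rightarrow> real) i. c * v i"
  by unfold_locales (simp_all add: fun_eq_iff algebra_simps)

lemma fun_vec_independent_if_orthogonal:
  assumes pos: "\<And>u. u \<in> V \<Longrightarrow> 0 < matrix_form n C u u"
    and orth: "\<And>u w. u \<in> V \<Longrightarrow> w \<in> V \<Longrightarrow> u \<noteq> w \<Longrightarrow> matrix_form n C w u = 0"
  shows "fun_vec.independent V"
  unfolding fun_vec.independent_explicit_finite_subsets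
proof (intro allI impI ballI)
  fix S c w assume S: "S \<subseteq> V" "finite S" and w: "w \<in> S"
    and comb: "(\<Sum>v\<in>S. (\<lambda>i. c v * v i)) = 0"
  have "\<forall>j. (\<Sum>v\<in>S. c v * v j) = 0"
    using fun_cong[OF comb] by (simp add: sum_fun_apply)
  then have "0 = matrix_form n C w (\<lambda>j. \<Sum>v\<in>S. c v * v j)"
    by (simp add: matrix_form_def)
  also have "\<dots> = (\<Sum>v\<in>S. c v * matrix_form n C w v)"
    by (rule matrix_form_sum_right)
  also have "\<dots> = c w * matrix_form n C w w"
  proof -
    have "matrix_form n C w v = 0" if "v \<in> S - {w}" for v
      using that S(1) w by (intro orth) auto
    then have "(\<Sum>v\<in>S - {w}. c v * matrix_form n C w v) = 0"
      by simp
    then show ?thesis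
      using sum.remove[OF \<open>finite S\<close> w, of "\<lambda>v. c v * matrix_form n C w v"] by simp
  qed
  finally have "c w * matrix_form n C w w = 0" by simp
  then show "c w = 0" using pos[of w] S w by auto
qed

lemma fun_vec_span_unit_vectors:
  assumes "\<And>i. n \<le> i \<Longrightarrow> v i = 0"
  shows "v \<in> fun_vec.span ((\<lambda>k j. if j = k then 1 else 0) ` {..<n})"
proof -
  have "v = (\<Sum>k<n. (\<lambda>j. v k * (if j = k then 1 else 0)))"
  proof
    fix j
    show "v j = (\<Sum>k<n. (\<lambda>j. v k * (if j = k then 1 else 0))) j"
      using assms[of j] by (simp add: sum_fun_apply if_distrib[of "\<lambda>x. _ * x"] cong: if_cong)
  qed
  also have "\<dots> \<in> fun_vec.span ((\<lambda>k j. if j = k then 1 else 0) ` {..<n})"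
    by (intro fun_vec.span_sum fun_vec.span_scale fun_vec.span_base) auto
  finally show ?thesis .
qed

text \<open>Eigenvectors of distinct eigenvalues are \<open>C\<close>-orthogonal, hence independent once truncated
  to their first \<open>n\<close> coordinates. Finiteness matters because \<^const>\<open>Min\<close> and \<^const>\<open>Max\<close>
  are unspecified on infinite sets.\<close>

lemma gen_eigenvalues_finite:
  assumes A_sym: "\<And>i j. A i j = A j i" and C_sym: "\<And>i j. C i j = C j i"
    and C_pos: "\<And>v. \<exists>i<n. v i \<noteq> 0 \<Longrightarrow> 0 < matrix_form n C v v"
  shows "finite (gen_eigenvalues n A C)"
proof -
  define E where "E = gen_eigenvalues n A C"
  have "\<exists>v. (\<exists>i<n. v i \<noteq> 0) \<and> (\<forall>i<n. (\<Sum>j<n. A i j * v j) = t * (\<Sum>j<n. C i j * v j))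
          \<and> (\<forall>i\<ge>n. v i = 0)" if "t \<in> E" for t
  proof -
    from that obtain v where "\<exists>i<n. v i \<noteq> 0"
      and "\<forall>i<n. (\<Sum>j<n. A i j * v j) = t * (\<Sum>j<n. C i j * v j)"
      by (auto simp: E_def gen_eigenvalues_def)
    then show ?thesis by (intro exI[of _ "\<lambda>i. if i < n then v i else 0"]) auto
  qed
  then obtain ev where ev_nonzero: "\<And>t. t \<in> E \<Longrightarrow> \<exists>i<n. ev t i \<noteq> 0"
    and ev_eigen: "\<And>t. t \<in> E \<Longrightarrow> \<forall>i<n. (\<Sum>j<n. A i j * ev t j) = t * (\<Sum>j<n. C i j * ev t j)"
    and ev_support: "\<And>t i. t \<in> E \<Longrightarrow> n \<le> i \<Longrightarrow> ev t i = 0"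
    by metis
  have ev_pos: "0 < matrix_form n C (ev t) (ev t)" if "t \<in> E" for t
    using C_pos ev_nonzero that by blast
  have ev_orth: "matrix_form n C (ev t) (ev s) = 0" if "t \<in> E" "s \<in> E" "t \<noteq> s" for t s
    using gen_eigenvectors_orthogonal[OF A_sym C_sym ev_eigen ev_eigen] that by blast
  have "inj_on ev E"
  proof (rule inj_onI, rule ccontr)
    fix t s assume "t \<in> E" "s \<in> E" "ev t = ev s" "t \<noteq> s"
    then show False using ev_orth[of t s] ev_pos[of t] by simp
  qed
  have "fun_vec.independent (ev ` E)"
    using ev_pos ev_orth by (intro fun_vec_independent_if_orthogonal) auto
  moreover have "ev ` E \<subseteq> fun_vec.span ((\<lambda>k j. if j = k then 1 else 0) ` {..<n})"
    using ev_support fun_vec_span_unit_vectors by blast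
  ultimately have "finite (ev ` E)"
    using fun_vec.independent_span_bound by blast
  with \<open>inj_on ev E\<close> show ?thesis
    by (simp add: E_def finite_image_iff)
qed

lemma bounded_coordinates_convergent_subseq:
  fixes s :: "nat \<Rightarrow> 'a :: countable \<Rightarrow> real"
  assumes "\<And>k i. \<bar>s k i\<bar> \<le> 1"
  obtains l \<phi> where "strict_mono \<phi>" and "\<And>i. (\<lambda>k. s (\<phi> k) i) \<longlonglongrightarrow> l i"
proof -
  have "compactin (product_topology (\<lambda>_. euclidean) UNIV) (PiE UNIV (\<lambda>_ :: 'a. {-1..1 :: real}))"
    by (simp add: compactin_PiE)
  then have "compact (Pi UNIV (\<lambda>_ :: 'a. {-1..1 :: real}))"
    by (simp add: euclidean_product_topology PiE_UNIV_domain)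
  moreover have "s k \<in> Pi UNIV (\<lambda>_. {-1..1})" for k
    using assms by (simp add: Pi_iff abs_le_iff)
  ultimately obtain l \<phi> where "strict_mono \<phi>" and lim: "(s \<circ> \<phi>) \<longlonglongrightarrow> l"
    using seq_compactE[OF compact_imp_seq_compact, of _ s] by blast
  moreover have "(\<lambda>k. s (\<phi> k) i) \<longlonglongrightarrow> l i" for i
    using continuous_on_tendsto_compose[OF continuous_on_product_coordinates lim] by simp
  ultimately show ?thesis using that by blast
qed

lemma matrix_form_tendsto:
  assumes "\<And>i. (\<lambda>k. s k i) \<longlonglongrightarrow> l i"
  shows "(\<lambda>k. matrix_form n A (s k) (s k)) \<longlonglongrightarrow> matrix_form n A l l"
  unfolding matrix_form_def by (intro tendsto_intros assms)

text \<open>The witnesses are normalised to the \<open>\<ell>\<^sub>1\<close> unit sphere, which is compact.\<close>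

lemma matrix_form_pencil_limit:
  fixes A C :: "nat \<Rightarrow> nat \<Rightarrow> real" and a :: "nat \<Rightarrow> real"
  assumes below: "\<And>k. \<exists>w. matrix_form n A w w < a k * matrix_form n C w w"
    and a: "a \<longlonglongrightarrow> c"
  shows "\<exists>v. (\<exists>i<n. v i \<noteq> 0) \<and> matrix_form n A v v \<le> c * matrix_form n C v v"
proof -
  from below have "\<forall>k. \<exists>w. matrix_form n A w w < a k * matrix_form n C w w" by blast
  then obtain w where w: "\<And>k. matrix_form n A (w k) (w k) < a k * matrix_form n C (w k) (w k)"
    by (auto dest!: choice)
  define nrm where "nrm k = (\<Sum>i<n. \<bar>w k i\<bar>)" for k
  have nrm_pos: "0 < nrm k" for k
  proof -
    have "\<exists>i<n. w k i \<noteq> 0"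
      using w[of k] matrix_form_vanishing[of n "w k"] by (metis less_irrefl mult_zero_right)
    then obtain i where "i < n" "w k i \<noteq> 0" by blast
    then show ?thesis unfolding nrm_def by (intro sum_pos2[of _ i]) auto
  qed
  define s where "s k i = (if i < n then w k i / nrm k else 0)" for k i
  have s_form: "matrix_form n X (s k) (s k) = (1 / nrm k)\<^sup>2 * matrix_form n X (w k) (w k)" for X k
    using matrix_form_scale[of n X "1 / nrm k" "w k"]
    by (simp add: s_def matrix_form_cong[of n "s k" "\<lambda>i. 1 / nrm k * w k i"])
  have s_below: "matrix_form n A (s k) (s k) < a k * matrix_form n C (s k) (s k)" for k
    using w[of k] nrm_pos[of k] by (simp add: s_form)
  have s_norm: "(\<Sum>i<n. \<bar>s k i\<bar>) = 1" for k
    using nrm_pos[of k] by (simp add: s_def abs_divide sum_divide_distrib[symmetric] nrm_def)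
  have s_bound: "\<bar>s k i\<bar> \<le> 1" for k i
  proof (cases "i < n")
    case True
    then show ?thesis using member_le_sum[of i "{..<n}" "\<lambda>i. \<bar>s k i\<bar>"] s_norm by simp
  qed (simp add: s_def)
  obtain l \<phi> where "strict_mono \<phi>" and coord: "\<And>i. (\<lambda>k. s (\<phi> k) i) \<longlonglongrightarrow> l i"
    using bounded_coordinates_convergent_subseq[of s, OF s_bound] by blast
  have "(\<lambda>k. \<Sum>i<n. \<bar>s (\<phi> k) i\<bar>) \<longlonglongrightarrow> (\<Sum>i<n. \<bar>l i\<bar>)"
    by (intro tendsto_intros coord)
  then have "(\<Sum>i<n. \<bar>l i\<bar>) = 1"
    by (simp add: s_norm LIMSEQ_const_iff)
  then have "\<exists>i<n. l i \<noteq> 0"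
    by (metis (no_types, lifting) abs_zero lessThan_iff sum.neutral zero_neq_one)
  have a_sub: "(\<lambda>k. a (\<phi> k)) \<longlonglongrightarrow> c"
    using LIMSEQ_subseq_LIMSEQ[OF a \<open>strict_mono \<phi>\<close>] by (simp add: comp_def)
  have "matrix_form n A l l \<le> c * matrix_form n C l l"
  proof (rule tendsto_le[OF trivial_limit_sequentially])
    show "(\<lambda>k. a (\<phi> k) * matrix_form n C (s (\<phi> k)) (s (\<phi> k))) \<longlonglongrightarrow> c * matrix_form n C l l"
      by (intro tendsto_mult a_sub matrix_form_tendsto coord)
    show "(\<lambda>k. matrix_form n A (s (\<phi> k)) (s (\<phi> k))) \<longlonglongrightarrow> matrix_form n A l l"
      by (intro matrix_form_tendsto coord)
    show "\<forall>\<^sub>F k in sequentially. matrix_form n A (s (\<phi> k)) (s (\<phi> k))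
        \<le> a (\<phi> k) * matrix_form n C (s (\<phi> k)) (s (\<phi> k))"
      using s_below by (intro always_eventually allI less_imp_le)
  qed
  with \<open>\<exists>i<n. l i \<noteq> 0\<close> show ?thesis by blast
qed

lemma uminus_image_Collect: "uminus ` {x :: 'a :: group_add. P x} = {x. P (- x)}"
proof (rule set_eqI)
  fix x :: 'a
  show "x \<in> uminus ` {x. P x} \<longleftrightarrow> x \<in> {x. P (- x)}"
    by (metis (mono_tags) image_iff mem_Collect_eq minus_minus)
qed

lemma psd_pencil_exists:
  fixes A C :: "nat \<Rightarrow> nat \<Rightarrow> real"
  assumes C_pos: "\<And>v. \<exists>i<n. v i \<noteq> 0 \<Longrightarrow> 0 < matrix_form n C v v"
  shows "\<exists>a. psd_mat n (\<lambda>i j. A i j - a * C i j)"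
proof (rule ccontr)
  assume none: "\<nexists>a. psd_mat n (\<lambda>i j. A i j - a * C i j)"
  have "\<exists>w. matrix_form n C w w < - inverse (real (Suc k)) * matrix_form n A w w" for k
  proof -
    obtain w where "matrix_form n A w w < - real (Suc k) * matrix_form n C w w"
      using none[unfolded psd_mat_iff_matrix_form matrix_form_diff] by (auto simp: not_le)
    then show ?thesis by (intro exI[of _ w]) (simp add: field_simps)
  qed
  moreover have "(\<lambda>k. - inverse (real (Suc k))) \<longlonglongrightarrow> 0"
    using tendsto_minus[OF LIMSEQ_inverse_real_of_nat] by simp
  ultimately have "\<exists>v. (\<exists>i<n. v i \<noteq> 0) \<and> matrix_form n C v v \<le> 0 * matrix_form n A v v"
    by (rule matrix_form_pencil_limit)
  then show False using C_pos by (metis mult_zero_left not_le)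
qed

lemma psd_pencil_bdd_above:
  fixes A C :: "nat \<Rightarrow> nat \<Rightarrow> real"
  assumes "0 < n" and "0 < C 0 0"
  shows "bdd_above {a. psd_mat n (\<lambda>i j. A i j - a * C i j)}"
proof
  fix a assume "a \<in> {a. psd_mat n (\<lambda>i j. A i j - a * C i j)}"
  then have "0 \<le> A 0 0 - a * C 0 0"
    using psd_mat_diag_nonneg[of n _ 0] \<open>0 < n\<close> by fastforce
  then show "a \<le> A 0 0 / C 0 0" using \<open>0 < C 0 0\<close> by (simp add: le_divide_eq)
qed

lemma Sup_psd_pencil_least_gen_eigenvalue:
  fixes A C :: "nat \<Rightarrow> nat \<Rightarrow> real"
  assumes "0 < n" and A_sym: "\<And>i j. A i j = A j i" and C_sym: "\<And>i j. C i j = C j i"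
    and C_pos: "\<And>v. \<exists>i<n. v i \<noteq> 0 \<Longrightarrow> 0 < matrix_form n C v v"
  defines "lam \<equiv> Sup {a. psd_mat n (\<lambda>i j. A i j - a * C i j)}"
  shows "lam \<in> gen_eigenvalues n A C" and "\<And>t. t \<in> gen_eigenvalues n A C \<Longrightarrow> lam \<le> t"
proof -
  define L where "L = {a. psd_mat n (\<lambda>i j. A i j - a * C i j)}"
  have L_iff: "a \<in> L \<longleftrightarrow> (\<forall>v. a * matrix_form n C v v \<le> matrix_form n A v v)" for a
    by (simp add: L_def psd_mat_iff_matrix_form matrix_form_diff)
  have "L \<noteq> {}" using psd_pencil_exists[OF C_pos] by (simp add: L_def)
  have "\<exists>i<n. (if i = 0 then 1 else 0 :: real) \<noteq> 0" using \<open>0 < n\<close> by auto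
  then have "0 < C 0 0"
    using C_pos[of "\<lambda>i. if i = 0 then 1 else 0"] by (simp only: matrix_form_unit[OF \<open>0 < n\<close>])
  then have "bdd_above L" unfolding L_def by (rule psd_pencil_bdd_above[OF \<open>0 < n\<close>])
  have lam_L: "lam \<in> L"
    unfolding L_iff
  proof
    fix v show "lam * matrix_form n C v v \<le> matrix_form n A v v"
    proof (cases "\<exists>i<n. v i \<noteq> 0")
      case True
      then have pos: "0 < matrix_form n C v v" by (rule C_pos)
      have "lam \<le> matrix_form n A v v / matrix_form n C v v"
        unfolding lam_def L_def[symmetric]
        by (rule cSup_least[OF \<open>L \<noteq> {}\<close>]) (simp add: L_iff pos le_divide_eq)
      then show ?thesis using pos by (simp add: le_divide_eq)
    qed (simp add: matrix_form_vanishing)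
  qed
  show "lam \<in> gen_eigenvalues n A C"
  proof -
    have "\<exists>w. matrix_form n A w w < (lam + inverse (real (Suc k))) * matrix_form n C w w" for k
    proof -
      have "lam + inverse (real (Suc k)) \<notin> L"
        using cSup_upper[OF _ \<open>bdd_above L\<close>, of "lam + inverse (real (Suc k))"]
        by (auto simp: lam_def L_def)
      then show ?thesis by (auto simp: L_iff not_le)
    qed
    moreover have "(\<lambda>k. lam + inverse (real (Suc k))) \<longlonglongrightarrow> lam"
      using tendsto_add[OF tendsto_const LIMSEQ_inverse_real_of_nat] by simp
    ultimately have "\<exists>v. (\<exists>i<n. v i \<noteq> 0) \<and> matrix_form n A v v \<le> lam * matrix_form n C v v"
      by (rule matrix_form_pencil_limit)
    then obtain v where v: "\<exists>i<n. v i \<noteq> 0" "matrix_form n A v v \<le> lam * matrix_form n C v v"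
      by blast
    have psd: "psd_mat n (\<lambda>i j. A i j - lam * C i j)"
      using lam_L by (simp add: L_def)
    have null: "matrix_form n (\<lambda>i j. A i j - lam * C i j) v v = 0"
      using v(2) lam_L unfolding L_iff matrix_form_diff by (metis antisym diff_ge_0_iff_ge eq_iff_diff_eq_0)
    have "\<forall>i<n. (\<Sum>j<n. (A i j - lam * C i j) * v j) = 0"
      by (rule psd_mat_null_vector[OF psd _ null]) (simp add: A_sym C_sym)
    then have "\<forall>i<n. (\<Sum>j<n. A i j * v j) = lam * (\<Sum>j<n. C i j * v j)"
      by (simp add: left_diff_distrib sum_subtractf sum_distrib_left mult.assoc)
    with v(1) show ?thesis unfolding gen_eigenvalues_def by blast
  qed
  show "lam \<le> t" if t: "t \<in> gen_eigenvalues n A C" for t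
  proof -
    obtain v where "\<exists>i<n. v i \<noteq> 0" and eig: "\<forall>i<n. (\<Sum>j<n. A i j * v j) = t * (\<Sum>j<n. C i j * v j)"
      using t unfolding gen_eigenvalues_def by blast
    then have pos: "0 < matrix_form n C v v" by (intro C_pos)
    have "lam * matrix_form n C v v \<le> t * matrix_form n C v v"
      using lam_L matrix_form_gen_eigenvector[OF eig] unfolding L_iff by metis
    then show ?thesis using pos by simp
  qed
qed

theorem Sup_psd_pencil_eq_gen_eig_min:
  fixes A C :: "nat \<Rightarrow> nat \<Rightarrow> real"
  assumes "0 < n" and "\<And>i j. A i j = A j i" and "\<And>i j. C i j = C j i"
    and "\<And>v. \<exists>i<n. v i \<noteq> 0 \<Longrightarrow> 0 < matrix_form n C v v"
  shows "Sup {a. psd_mat n (\<lambda>i j. A i j - a * C i j)} = gen_eig_min n A C"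
  unfolding gen_eig_min_def
proof (rule Min_eqI[symmetric])
  show "finite (gen_eigenvalues n A C)"
    using assms(2-4) by (rule gen_eigenvalues_finite)
qed (use Sup_psd_pencil_least_gen_eigenvalue[OF assms] in auto)

theorem Inf_psd_pencil_eq_gen_eig_max:
  fixes A C :: "nat \<Rightarrow> nat \<Rightarrow> real"
  assumes "0 < n" and A_sym: "\<And>i j. A i j = A j i" and C_sym: "\<And>i j. C i j = C j i"
    and C_pos: "\<And>v. \<exists>i<n. v i \<noteq> 0 \<Longrightarrow> 0 < matrix_form n C v v"
  shows "Inf {a. psd_mat n (\<lambda>i j. a * C i j - A i j)} = gen_eig_max n A C"
proof -
  define lam where "lam = Sup {a. psd_mat n (\<lambda>i j. - A i j - a * C i j)}"
  have neg_sym: "\<And>i j. - A i j = - A j i" using A_sym by simp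
  note least = Sup_psd_pencil_least_gen_eigenvalue[where A = "\<lambda>i j. - A i j",
      OF \<open>0 < n\<close> neg_sym C_sym C_pos, folded lam_def]
  have "{a. psd_mat n (\<lambda>i j. a * C i j - A i j)} = uminus ` {a. psd_mat n (\<lambda>i j. - A i j - a * C i j)}"
    unfolding uminus_image_Collect
    by (intro Collect_cong arg_cong[where f = "psd_mat n"]) (simp add: fun_eq_iff)
  then have "Inf {a. psd_mat n (\<lambda>i j. a * C i j - A i j)} = - lam"
    by (simp add: lam_def Inf_real_def image_image)
  also have "\<dots> = gen_eig_max n A C"
    unfolding gen_eig_max_def
  proof (rule Max_eqI[symmetric])
    show "finite (gen_eigenvalues n A C)"
      using A_sym C_sym C_pos by (rule gen_eigenvalues_finite)
    show "- lam \<in> gen_eigenvalues n A C"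
      using least(1) by (simp add: gen_eigenvalues_uminus_iff)
    show "t \<le> - lam" if "t \<in> gen_eigenvalues n A C" for t
      using least(2)[of "- t"] that by (simp add: gen_eigenvalues_uminus_iff)
  qed
  finally show ?thesis .
qed

section \<open>Hankel pencils of moment sequences\<close>

lemma psd_hankel_pencils_ordered:
  fixes m :: "nat \<Rightarrow> real"
  assumes "0 < m 0"
    and "psd_mat (r + 1) (\<lambda>i j. hankel1 m i j - a * hankel0 m i j)"
    and "psd_mat (s + 1) (\<lambda>i j. b * hankel0 m i j - hankel1 m i j)"
  shows "a \<le> b"
proof -
  have "0 \<le> m 1 - a * m 0" and "0 \<le> b * m 0 - m 1"
    using psd_mat_diag_nonneg[OF assms(2), of 0] psd_mat_diag_nonneg[OF assms(3), of 0]
    by (simp_all add: hankel0_def hankel1_def)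
  then have "a * m 0 \<le> b * m 0" by linarith
  then show ?thesis using assms(1) by simp
qed

text \<open>The Hankel matrices of \<open>(-1)\<^sup>k m\<^sub>k\<close>, the moments of \<open>-f\<close>, are those of \<open>m\<close> conjugated by
  \<open>diag ((-1)\<^sup>i)\<close>; this turns statements about \<open>\<tau>\<^sup>u\<close> into statements about \<open>\<tau>\<^sup>\<ell>\<close>.\<close>

lemma psd_upper_pencil_iff_reflected:
  fixes m :: "nat \<Rightarrow> real"
  defines "m' \<equiv> \<lambda>k. (- 1) ^ k * m k"
  shows "psd_mat n (\<lambda>i j. b * hankel0 m i j - hankel1 m i j) \<longleftrightarrow>
    psd_mat n (\<lambda>i j. hankel1 m' i j - (- b) * hankel0 m' i j)"
proof -
  define d where "d i = (- 1 :: real) ^ i" for i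
  have flip: "(\<lambda>i j. hankel1 m' i j - (- b) * hankel0 m' i j)
      = (\<lambda>i j. d i * (b * hankel0 m i j - hankel1 m i j) * d j)"
    by (simp add: m'_def d_def hankel0_def hankel1_def power_add algebra_simps)
  have "d i * d i = 1" for i
    by (simp add: d_def power_mult_distrib[symmetric])
  then show ?thesis
    unfolding flip by (rule psd_mat_congruence_sign[symmetric])
qed

lemma tau_upper_eq_uminus_tau_lower:
  fixes m :: "nat \<Rightarrow> real"
  defines "m' \<equiv> \<lambda>k. (- 1) ^ k * m k"
  shows "tau_upper m r = - tau_lower m' r"
proof -
  define L' where "L' = {a. psd_mat (r + 1) (\<lambda>i j. hankel1 m' i j - a * hankel0 m' i j)}"
  have "{a. psd_mat (r + 1) (\<lambda>i j. a * hankel0 m i j - hankel1 m i j)} = uminus ` L'"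
    unfolding L'_def uminus_image_Collect m'_def by (simp only: psd_upper_pencil_iff_reflected)
  then have "tau_upper m r = Inf (uminus ` L')"
    by (simp only: tau_upper_def)
  also have "\<dots> = - Sup L'"
    by (simp add: Inf_real_def image_image)
  finally show ?thesis
    by (simp only: tau_lower_def L'_def)
qed

lemma push_moment_uminus:
  "push_moment M (\<lambda>x. - g x) = (\<lambda>k. (- 1) ^ k * push_moment M g k)"
proof
  fix k
  show "push_moment M (\<lambda>x. - g x) k = (- 1) ^ k * push_moment M g k"
    unfolding push_moment_def power_minus[of "g _"] by (rule integral_mult_right_zero)
qed

lemma matrix_form_moments:
  fixes M :: "'a measure" and g w :: "'a \<Rightarrow> real"
  assumes int: "\<And>k. integrable M (\<lambda>x. w x * g x ^ k)"
  shows "matrix_form n (\<lambda>i j. \<integral>x. w x * g x ^ (i + j) \<partial>M) v v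
    = (\<integral>x. w x * (\<Sum>i<n. v i * g x ^ i)\<^sup>2 \<partial>M)"
proof -
  have "w x * (\<Sum>i<n. v i * g x ^ i)\<^sup>2 = (\<Sum>i<n. \<Sum>j<n. v i * v j * (w x * g x ^ (i + j)))" for x
    by (simp add: power2_eq_square sum_product sum_distrib_left power_add mult_ac)
  then have "(\<integral>x. w x * (\<Sum>i<n. v i * g x ^ i)\<^sup>2 \<partial>M)
      = (\<Sum>i<n. \<Sum>j<n. v i * v j * (\<integral>x. w x * g x ^ (i + j) \<partial>M))"
    using int by (simp add: Bochner_Integration.integral_sum Bochner_Integration.integrable_sum)
  then show ?thesis
    by (simp add: matrix_form_def mult_ac)
qed

section \<open>Moments of a bounded function\<close>

lemma sum_coeff_power_eq_poly:
  fixes p :: "'a :: comm_semiring_1 poly"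
  assumes "degree p < n"
  shows "(\<Sum>i<n. coeff p i * t ^ i) = poly p t"
proof -
  have "(\<Sum>i<n. coeff p i * t ^ i) = (\<Sum>i\<le>degree p. coeff p i * t ^ i)"
    by (rule sum.mono_neutral_right) (use assms in \<open>auto simp: coeff_eq_0\<close>)
  then show ?thesis by (simp add: poly_altdef)
qed

lemma exists_nonzero_poly_value:
  fixes v :: "nat \<Rightarrow> real" and S :: "real set"
  assumes "\<exists>i<n. v i \<noteq> 0" and "infinite S \<or> n \<le> card S"
  shows "\<exists>s\<in>S. (\<Sum>i<n. v i * s ^ i) \<noteq> 0"
proof (rule ccontr)
  define p where "p = (\<Sum>i<n. monom (v i) i)"
  have poly_p: "poly p t = (\<Sum>i<n. v i * t ^ i)" for t
    by (simp add: p_def poly_sum poly_monom)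
  have "coeff p k = (if k < n then v k else 0)" for k
    by (simp add: p_def coeff_sum coeff_monom)
  then have "p \<noteq> 0" using assms(1) by (metis coeff_0)
  have "degree p \<le> n - 1"
    unfolding p_def by (intro degree_sum_le) (auto intro: order.trans[OF degree_monom_le])
  then have "degree p < n"
    using assms(1) by linarith
  assume "\<not> (\<exists>s\<in>S. (\<Sum>i<n. v i * s ^ i) \<noteq> 0)"
  then have roots: "S \<subseteq> {t. poly p t = 0}" by (simp add: poly_p subset_eq)
  have fin: "finite {t. poly p t = 0}" and bound: "card {t. poly p t = 0} \<le> degree p"
    using \<open>p \<noteq> 0\<close> by (simp_all add: poly_roots_finite card_poly_roots_bound)
  have "finite S" using roots fin by (rule finite_subset)
  moreover have "card S \<le> degree p" using card_mono[OF fin roots] bound by (rule le_trans)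
  ultimately show False using assms(2) \<open>degree p < n\<close> by auto
qed

lemma geometric_domination:
  fixes \<alpha> \<beta> K L :: real
  assumes "0 \<le> \<beta>" and "\<beta> < \<alpha>" and "0 < K"
  shows "\<exists>N. \<beta> * (\<beta>\<^sup>2) ^ N * L < K * (\<alpha>\<^sup>2) ^ N"
proof -
  have "0 < \<alpha>" using assms by linarith
  have "(\<lambda>N. \<beta> * L * ((\<beta> / \<alpha>)\<^sup>2) ^ N) \<longlonglongrightarrow> 0"
    using assms by (intro tendsto_mult_right_zero LIMSEQ_power_zero) (simp add: power_less_one_iff abs_less_iff)
  then have "\<forall>\<^sub>F N in sequentially. \<beta> * L * ((\<beta> / \<alpha>)\<^sup>2) ^ N < K"
    using \<open>0 < K\<close> by (rule order_tendstoD(2))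
  then obtain N where N: "\<beta> * L * ((\<beta> / \<alpha>)\<^sup>2) ^ N < K"
    unfolding eventually_sequentially by blast
  have "(\<beta> / \<alpha>)\<^sup>2 * \<alpha>\<^sup>2 = \<beta>\<^sup>2"
    using \<open>0 < \<alpha>\<close> by (simp add: power_divide)
  then have "((\<beta> / \<alpha>)\<^sup>2) ^ N * (\<alpha>\<^sup>2) ^ N = (\<beta>\<^sup>2) ^ N"
    unfolding power_mult_distrib[symmetric] by (simp only:)
  then have "\<beta> * (\<beta>\<^sup>2) ^ N * L < K * (\<alpha>\<^sup>2) ^ N"
    using mult_strict_right_mono[OF N, of "(\<alpha>\<^sup>2) ^ N"] \<open>0 < \<alpha>\<close> by (simp add: algebra_simps)
  then show ?thesis ..
qed

lemma power_weighted_bound: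
  fixes a b c t :: real
  assumes "a < c" and "c \<le> b" and "t \<le> b"
  shows "(t - c) * ((b - t)\<^sup>2) ^ N
    \<le> (a - c) * ((b - a)\<^sup>2) ^ N * (if t < a then 1 else 0) + (b - c) * ((b - c)\<^sup>2) ^ N"
proof -
  have "0 \<le> (b - c) * ((b - c)\<^sup>2) ^ N" using assms by simp
  consider "t < a" | "c \<le> t" | "a \<le> t" "t < c" by linarith
  then show ?thesis
  proof cases
    case 1
    then have "((b - a)\<^sup>2) ^ N \<le> ((b - t)\<^sup>2) ^ N"
      using assms by (intro power_mono) auto
    have "(t - c) * ((b - t)\<^sup>2) ^ N \<le> (a - c) * ((b - t)\<^sup>2) ^ N"
      using 1 by (intro mult_right_mono) auto
    also have "\<dots> \<le> (a - c) * ((b - a)\<^sup>2) ^ N"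
      using \<open>((b - a)\<^sup>2) ^ N \<le> ((b - t)\<^sup>2) ^ N\<close> \<open>a < c\<close> by (intro mult_left_mono_neg) auto
    finally show ?thesis using 1 \<open>0 \<le> (b - c) * ((b - c)\<^sup>2) ^ N\<close> by simp
  next
    case 2
    then have "(t - c) * ((b - t)\<^sup>2) ^ N \<le> (b - c) * ((b - c)\<^sup>2) ^ N"
      using assms by (intro mult_mono power_mono) auto
    then show ?thesis using 2 \<open>a < c\<close> by simp
  next
    case 3
    then have "(t - c) * ((b - t)\<^sup>2) ^ N \<le> 0"
      by (intro mult_nonpos_nonneg) auto
    then show ?thesis using 3 \<open>0 \<le> (b - c) * ((b - c)\<^sup>2) ^ N\<close> by simp
  qed
qed

locale bounded_moments = finite_measure M for M :: "'a measure" +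
  fixes g :: "'a \<Rightarrow> real" and lo hi :: real
  assumes g_measurable [measurable]: "g \<in> borel_measurable M"
    and g_bounds: "\<And>x. x \<in> space M \<Longrightarrow> lo \<le> g x \<and> g x \<le> hi"
    and space_pos: "0 < measure M (space M)"
begin

lemma integrable_continuous_comp:
  fixes q :: "real \<Rightarrow> real"
  assumes "continuous_on UNIV q"
  shows "integrable M (\<lambda>x. q (g x))"
proof -
  have "bounded (q ` {lo..hi})"
    using assms by (intro compact_imp_bounded compact_continuous_image) (auto intro: continuous_on_subset)
  then obtain B where B: "\<forall>t\<in>{lo..hi}. norm (q t) \<le> B"
    by (auto simp: bounded_iff)
  show ?thesis
  proof (rule integrable_const_bound)
    show "AE x in M. norm (q (g x)) \<le> B"
      using B g_bounds by (intro AE_I2) auto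
    show "(\<lambda>x. q (g x)) \<in> borel_measurable M"
      using borel_measurable_continuous_onI[OF assms] by measurable
  qed
qed

lemma integrable_power: "integrable M (\<lambda>x. g x ^ k)"
  by (rule integrable_continuous_comp[of "\<lambda>t. t ^ k"]) (intro continuous_intros)

lemma integrable_weighted_power: "integrable M (\<lambda>x. (g x - a) * g x ^ k)"
  by (rule integrable_continuous_comp[of "\<lambda>t. (t - a) * t ^ k"]) (intro continuous_intros)

lemma push_moment_zero: "push_moment M g 0 = measure M (space M)"
  by (simp add: push_moment_def)

lemma hankel0_form:
  "matrix_form n (hankel0 (push_moment M g)) v v = (\<integral>x. (\<Sum>i<n. v i * g x ^ i)\<^sup>2 \<partial>M)"
proof -
  have "integrable M (\<lambda>x. 1 * g x ^ k)" for k
    using integrable_power by simp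
  moreover have "hankel0 (push_moment M g) = (\<lambda>i j. \<integral>x. 1 * g x ^ (i + j) \<partial>M)"
    by (simp add: fun_eq_iff hankel0_def push_moment_def)
  ultimately show ?thesis
    using matrix_form_moments[of M "\<lambda>_. 1" g] by simp
qed

lemma lower_pencil_form:
  "matrix_form n (\<lambda>i j. hankel1 (push_moment M g) i j - a * hankel0 (push_moment M g) i j) v v
    = (\<integral>x. (g x - a) * (\<Sum>i<n. v i * g x ^ i)\<^sup>2 \<partial>M)"
proof -
  have "hankel1 (push_moment M g) i j - a * hankel0 (push_moment M g) i j
      = (\<integral>x. (g x - a) * g x ^ (i + j) \<partial>M)" for i j
    using integrable_power[of "i + j + 1"] integrable_power[of "i + j"]
    by (simp add: hankel0_def hankel1_def push_moment_def left_diff_distrib)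
  with matrix_form_moments[of M "\<lambda>x. g x - a" g, OF integrable_weighted_power] show ?thesis
    by simp
qed

lemma psd_lower_pencil_iff:
  "psd_mat n (\<lambda>i j. hankel1 (push_moment M g) i j - a * hankel0 (push_moment M g) i j)
    \<longleftrightarrow> (\<forall>v. 0 \<le> (\<integral>x. (g x - a) * (\<Sum>i<n. v i * g x ^ i)\<^sup>2 \<partial>M))"
  by (simp only: psd_mat_iff_matrix_form lower_pencil_form)

lemma psd_lower_pencil_at_lo:
  "psd_mat n (\<lambda>i j. hankel1 (push_moment M g) i j - lo * hankel0 (push_moment M g) i j)"
  unfolding psd_lower_pencil_iff
proof
  fix v
  show "0 \<le> (\<integral>x. (g x - lo) * (\<Sum>i<n. v i * g x ^ i)\<^sup>2 \<partial>M)"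
    using g_bounds by (intro integral_nonneg_AE AE_I2) simp
qed

lemma psd_lower_pencil_antimono:
  assumes "b \<le> a"
    and "psd_mat n (\<lambda>i j. hankel1 (push_moment M g) i j - a * hankel0 (push_moment M g) i j)"
  shows "psd_mat n (\<lambda>i j. hankel1 (push_moment M g) i j - b * hankel0 (push_moment M g) i j)"
  unfolding psd_mat_iff_matrix_form matrix_form_diff
proof
  fix v
  have "0 \<le> matrix_form n (hankel0 (push_moment M g)) v v"
    unfolding hankel0_form by (intro integral_nonneg_AE AE_I2) simp
  with \<open>b \<le> a\<close> have "b * matrix_form n (hankel0 (push_moment M g)) v v
      \<le> a * matrix_form n (hankel0 (push_moment M g)) v v"
    by (rule mult_right_mono)
  moreover have "0 \<le> matrix_form n (hankel1 (push_moment M g)) v v - a * matrix_form n (hankel0 (push_moment M g)) v v"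
    using assms(2) unfolding psd_mat_iff_matrix_form matrix_form_diff by blast
  ultimately show "0 \<le> matrix_form n (hankel1 (push_moment M g)) v v - b * matrix_form n (hankel0 (push_moment M g)) v v"
    by linarith
qed

lemma bounded_moments_uminus: "bounded_moments M (\<lambda>x. - g x) (- hi) (- lo)"
proof
  show "(\<lambda>x. - g x) \<in> borel_measurable M" by measurable
  show "- hi \<le> - g x \<and> - g x \<le> - lo" if "x \<in> space M" for x
    using g_bounds[OF that] by simp
  show "0 < measure M (space M)" by (rule space_pos)
qed

lemma tau_upper_reflected:
  "tau_upper (push_moment M g) r = - tau_lower (push_moment M (\<lambda>x. - g x)) r"
  unfolding push_moment_uminus by (rule tau_upper_eq_uminus_tau_lower)

lemma psd_upper_pencil_at_hi:
  "psd_mat n (\<lambda>i j. hi * hankel0 (push_moment M g) i j - hankel1 (push_moment M g) i j)"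
proof -
  interpret reflected: bounded_moments M "\<lambda>x. - g x" "- hi" "- lo" by (rule bounded_moments_uminus)
  show ?thesis
    using reflected.psd_lower_pencil_at_lo
    unfolding push_moment_uminus psd_upper_pencil_iff_reflected .
qed

lemma psd_pencils_ordered:
  assumes "psd_mat (r + 1) (\<lambda>i j. hankel1 (push_moment M g) i j - a * hankel0 (push_moment M g) i j)"
    and "psd_mat (s + 1) (\<lambda>i j. b * hankel0 (push_moment M g) i j - hankel1 (push_moment M g) i j)"
  shows "a \<le> b"
  using psd_hankel_pencils_ordered[OF _ assms] space_pos by (simp only: push_moment_zero)

lemma bdd_above_lower_pencil:
  "bdd_above {a. psd_mat (r + 1) (\<lambda>i j. hankel1 (push_moment M g) i j - a * hankel0 (push_moment M g) i j)}"
  using psd_pencils_ordered[OF _ psd_upper_pencil_at_hi] by (intro bdd_aboveI) blast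

lemma tau_lower_ge: "lo \<le> tau_lower (push_moment M g) r"
  unfolding tau_lower_def by (rule cSup_upper[OF _ bdd_above_lower_pencil]) (simp add: psd_lower_pencil_at_lo)

lemma tau_lower_le_tau_upper: "tau_lower (push_moment M g) r \<le> tau_upper (push_moment M g) r"
  unfolding tau_lower_def tau_upper_def
proof (rule cSup_least)
  show "{a. psd_mat (r + 1) (\<lambda>i j. hankel1 (push_moment M g) i j - a * hankel0 (push_moment M g) i j)} \<noteq> {}"
    using psd_lower_pencil_at_lo by blast
  fix a assume "a \<in> {a. psd_mat (r + 1) (\<lambda>i j. hankel1 (push_moment M g) i j - a * hankel0 (push_moment M g) i j)}"
  then show "a \<le> Inf {b. psd_mat (r + 1) (\<lambda>i j. b * hankel0 (push_moment M g) i j - hankel1 (push_moment M g) i j)}"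
    using psd_upper_pencil_at_hi psd_pencils_ordered by (intro cInf_greatest) blast+
qed

lemma tau_upper_le: "tau_upper (push_moment M g) r \<le> hi"
proof -
  interpret reflected: bounded_moments M "\<lambda>x. - g x" "- hi" "- lo" by (rule bounded_moments_uminus)
  show ?thesis using reflected.tau_lower_ge[of r] unfolding tau_upper_reflected by linarith
qed

lemma tau_lower_decseq: "decseq (tau_lower (push_moment M g))"
proof (rule decseq_SucI)
  fix r
  have "{a. psd_mat (Suc r + 1) (\<lambda>i j. hankel1 (push_moment M g) i j - a * hankel0 (push_moment M g) i j)}
      \<subseteq> {a. psd_mat (r + 1) (\<lambda>i j. hankel1 (push_moment M g) i j - a * hankel0 (push_moment M g) i j)}"
    using psd_mat_mono[of "r + 1" "Suc r + 1"] by auto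
  then show "tau_lower (push_moment M g) (Suc r) \<le> tau_lower (push_moment M g) r"
    unfolding tau_lower_def using psd_lower_pencil_at_lo bdd_above_lower_pencil
    by (intro cSup_subset_mono) blast+
qed

lemma tau_upper_incseq: "incseq (tau_upper (push_moment M g))"
proof -
  interpret reflected: bounded_moments M "\<lambda>x. - g x" "- hi" "- lo" by (rule bounded_moments_uminus)
  show ?thesis
    using reflected.tau_lower_decseq unfolding tau_upper_reflected decseq_def incseq_def by simp
qed

lemma exists_poly_pencil_integral_neg:
  assumes "a < c" and A_pos: "0 < emeasure M {x \<in> space M. g x < a}"
  shows "\<exists>p. (\<integral>x. (g x - c) * (poly p (g x))\<^sup>2 \<partial>M) < 0"
proof -
  define A where "A = {x \<in> space M. g x < a}"
  have A_sets [measurable]: "A \<in> sets M" unfolding A_def by measurable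
  have "0 < measure M A" using A_pos by (simp add: A_def emeasure_eq_measure)
  define b where "b = max hi c"
  have "0 \<le> b - c" "b - c < b - a" using \<open>a < c\<close> by (auto simp: b_def)
  moreover have "0 < (c - a) * measure M A" using \<open>a < c\<close> \<open>0 < measure M A\<close> by simp
  ultimately obtain N where N: "(b - c) * ((b - c)\<^sup>2) ^ N * measure M (space M)
      < (c - a) * measure M A * ((b - a)\<^sup>2) ^ N"
    by (metis geometric_domination)
  define h where "h x = (g x - c) * ((b - g x)\<^sup>2) ^ N" for x
  define bound where
    "bound x = (a - c) * ((b - a)\<^sup>2) ^ N * indicator A x + (b - c) * ((b - c)\<^sup>2) ^ N" for x
  have "h x \<le> bound x" if "x \<in> space M" for x
  proof -
    have "c \<le> b" "g x \<le> b" using g_bounds[OF that] by (auto simp: b_def)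
    moreover have "indicator A x = (if g x < a then 1 else 0 :: real)"
      using that by (simp add: A_def indicator_def)
    ultimately show ?thesis
      unfolding h_def bound_def by (simp only: power_weighted_bound[OF \<open>a < c\<close>])
  qed
  moreover have "integrable M h"
    unfolding h_def by (intro integrable_continuous_comp continuous_intros)
  moreover have int_A: "integrable M (indicator A :: 'a \<Rightarrow> real)"
    using A_sets by (simp add: less_top[symmetric])
  then have "integrable M bound"
    unfolding bound_def by (intro Bochner_Integration.integrable_add integrable_mult_right integrable_const)
  ultimately have "(\<integral>x. h x \<partial>M) \<le> (\<integral>x. bound x \<partial>M)"
    by (intro integral_mono) auto
  also have "(\<integral>x. bound x \<partial>M)
      = (a - c) * ((b - a)\<^sup>2) ^ N * measure M A + (b - c) * ((b - c)\<^sup>2) ^ N * measure M (space M)"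
    using int_A A_sets by (simp add: bound_def Int_absorb2 sets.sets_into_space mult_ac)
  finally have "(\<integral>x. h x \<partial>M) < 0" using N by (simp add: algebra_simps)
  moreover have "(poly ([:b, -1:] ^ N) t)\<^sup>2 = ((b - t)\<^sup>2) ^ N" for t
    by (simp add: poly_power) (metis power_mult mult.commute)
  ultimately have "(\<integral>x. (g x - c) * (poly ([:b, -1:] ^ N) (g x))\<^sup>2 \<partial>M) < 0"
    by (simp only: h_def)
  then show ?thesis ..
qed

lemma tau_lower_tendsto:
  assumes mass_near_lo: "\<And>\<delta>. 0 < \<delta> \<Longrightarrow> 0 < emeasure M {x \<in> space M. g x < lo + \<delta>}"
  shows "tau_lower (push_moment M g) \<longlonglongrightarrow> lo"
proof (rule order_tendstoI)
  fix c assume "c < lo"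
  have "c < tau_lower (push_moment M g) r" for r
    using \<open>c < lo\<close> tau_lower_ge[of r] by linarith
  then show "\<forall>\<^sub>F r in sequentially. c < tau_lower (push_moment M g) r"
    by (intro always_eventually allI)
next
  fix c assume "lo < c"
  define c' where "c' = (lo + c) / 2"
  have "lo < c'" "c' < c" using \<open>lo < c\<close> by (auto simp: c'_def)
  have "lo + (c' - lo) / 2 < c'" using \<open>lo < c'\<close> by (simp add: field_simps)
  moreover have "0 < emeasure M {x \<in> space M. g x < lo + (c' - lo) / 2}"
    using mass_near_lo \<open>lo < c'\<close> by simp
  ultimately obtain p where p: "(\<integral>x. (g x - c') * (poly p (g x))\<^sup>2 \<partial>M) < 0"
    using exists_poly_pencil_integral_neg by blast
  have "tau_lower (push_moment M g) r < c" if "degree p \<le> r" for r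
  proof -
    have not_psd: "\<not> psd_mat (r + 1) (\<lambda>i j. hankel1 (push_moment M g) i j - c' * hankel0 (push_moment M g) i j)"
    proof
      assume "psd_mat (r + 1) (\<lambda>i j. hankel1 (push_moment M g) i j - c' * hankel0 (push_moment M g) i j)"
      then have "0 \<le> (\<integral>x. (g x - c') * (\<Sum>i<r + 1. coeff p i * g x ^ i)\<^sup>2 \<partial>M)"
        unfolding psd_lower_pencil_iff by blast
      moreover have "(\<Sum>i<r + 1. coeff p i * g x ^ i) = poly p (g x)" for x
        using that by (intro sum_coeff_power_eq_poly) simp
      ultimately show False using p by simp
    qed
    have "a \<le> c'"
      if "psd_mat (r + 1) (\<lambda>i j. hankel1 (push_moment M g) i j - a * hankel0 (push_moment M g) i j)" for a
    proof (rule ccontr)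
      assume "\<not> a \<le> c'"
      then show False using psd_lower_pencil_antimono[OF _ that, of c'] not_psd by simp
    qed
    then have "tau_lower (push_moment M g) r \<le> c'"
      unfolding tau_lower_def using psd_lower_pencil_at_lo by (intro cSup_least) blast+
    then show ?thesis using \<open>c' < c\<close> by linarith
  qed
  then show "\<forall>\<^sub>F r in sequentially. tau_lower (push_moment M g) r < c"
    by (rule eventually_sequentiallyI)
qed

lemma tau_upper_tendsto:
  assumes mass_near_hi: "\<And>\<delta>. 0 < \<delta> \<Longrightarrow> 0 < emeasure M {x \<in> space M. hi - \<delta> < g x}"
  shows "tau_upper (push_moment M g) \<longlonglongrightarrow> hi"
proof -
  interpret reflected: bounded_moments M "\<lambda>x. - g x" "- hi" "- lo" by (rule bounded_moments_uminus)
  have "tau_lower (push_moment M (\<lambda>x. - g x)) \<longlonglongrightarrow> - hi"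
  proof (rule reflected.tau_lower_tendsto)
    fix \<delta> :: real assume "0 < \<delta>"
    have "{x \<in> space M. - g x < - hi + \<delta>} = {x \<in> space M. hi - \<delta> < g x}" by auto
    then show "0 < emeasure M {x \<in> space M. - g x < - hi + \<delta>}"
      using mass_near_hi[OF \<open>0 < \<delta>\<close>] by simp
  qed
  then have "(\<lambda>r. - tau_lower (push_moment M (\<lambda>x. - g x)) r) \<longlonglongrightarrow> - (- hi)"
    by (rule tendsto_minus)
  moreover have "tau_upper (push_moment M g) = (\<lambda>r. - tau_lower (push_moment M (\<lambda>x. - g x)) r)"
    using tau_upper_reflected by (intro ext)
  ultimately show ?thesis by simp
qed

lemma hankel0_form_pos:
  assumes "0 < emeasure M {x \<in> space M. (\<Sum>i<n. v i * g x ^ i) \<noteq> 0}"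
  shows "0 < matrix_form n (hankel0 (push_moment M g)) v v"
proof -
  have int: "integrable M (\<lambda>x. (\<Sum>i<n. v i * g x ^ i)\<^sup>2)"
    by (rule integrable_continuous_comp[of "\<lambda>t. (\<Sum>i<n. v i * t ^ i)\<^sup>2"]) (intro continuous_intros)
  have "(\<integral>x. (\<Sum>i<n. v i * g x ^ i)\<^sup>2 \<partial>M) \<noteq> 0"
  proof
    assume "(\<integral>x. (\<Sum>i<n. v i * g x ^ i)\<^sup>2 \<partial>M) = 0"
    then have "AE x in M. (\<Sum>i<n. v i * g x ^ i)\<^sup>2 = 0"
      using integral_nonneg_eq_0_iff_AE[OF int] by simp
    then have "emeasure M {x \<in> space M. (\<Sum>i<n. v i * g x ^ i) \<noteq> 0} = 0"
      by (subst (asm) AE_iff_measurable[OF _ refl]) auto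
    with assms show False by simp
  qed
  moreover have "0 \<le> (\<integral>x. (\<Sum>i<n. v i * g x ^ i)\<^sup>2 \<partial>M)"
    by (intro integral_nonneg_AE AE_I2) simp
  ultimately show ?thesis unfolding hankel0_form by linarith
qed

end

lemma hankel0_sym: "hankel0 m i j = hankel0 m j i"
  by (simp add: hankel0_def add.commute)

lemma hankel1_sym: "hankel1 m i j = hankel1 m j i"
  by (simp add: hankel1_def add.commute)

section \<open>Measures with full support\<close>

lemma measure_support_preimage_pos:
  assumes "measure_support M \<Omega> = \<Omega>" and "continuous_on \<Omega> h" and "x \<in> \<Omega>"
    and "open U" and "h x \<in> U"
  shows "0 < emeasure M {y \<in> \<Omega>. h y \<in> U}"
proof -
  obtain V where "open V" and V: "V \<inter> \<Omega> = h -` U \<inter> \<Omega>"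
    using assms(2,4) unfolding continuous_on_open_invariant by blast
  have "x \<in> V" using V assms(3,5) by blast
  then have "0 < emeasure M (V \<inter> \<Omega>)"
    using assms(1,3) \<open>open V\<close> unfolding measure_support_def by blast
  moreover have "V \<inter> \<Omega> = {y \<in> \<Omega>. h y \<in> U}" using V by blast
  ultimately show ?thesis by simp
qed

locale compact_support_moments =
  fixes \<Omega> :: "'a::euclidean_space set" and f :: "'a \<Rightarrow> real" and M :: "'a measure"
  assumes compact: "compact \<Omega>" and nonempty: "\<Omega> \<noteq> {}"
    and continuous: "continuous_on \<Omega> f"
    and space_eq: "space M = \<Omega>" and sets_eq: "sets M = sets (restrict_space borel \<Omega>)"
    and finite: "finite_measure M"
    and support: "measure_support M \<Omega> = \<Omega>"
begin

lemma f_bdd: "bdd_below (f ` \<Omega>)" "bdd_above (f ` \<Omega>)"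
  using compact_imp_bounded[OF compact_continuous_image[OF continuous compact]]
  by (simp_all add: bounded_imp_bdd_below bounded_imp_bdd_above)

lemma Inf_attained: "\<exists>x\<in>\<Omega>. f x = Inf (f ` \<Omega>)"
proof -
  obtain x where "x \<in> \<Omega>" "\<forall>y\<in>\<Omega>. f x \<le> f y"
    using continuous_attains_inf[OF compact nonempty continuous] by blast
  then show ?thesis by (intro bexI[of _ x] cInf_eq_minimum[symmetric]) auto
qed

lemma Sup_attained: "\<exists>x\<in>\<Omega>. f x = Sup (f ` \<Omega>)"
proof -
  obtain x where "x \<in> \<Omega>" "\<forall>y\<in>\<Omega>. f y \<le> f x"
    using continuous_attains_sup[OF compact nonempty continuous] by blast
  then show ?thesis by (intro bexI[of _ x] cSup_eq_maximum[symmetric]) auto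
qed

sublocale bounded_moments M f "Inf (f ` \<Omega>)" "Sup (f ` \<Omega>)"
proof (rule bounded_moments.intro[OF finite], unfold_locales)
  show "f \<in> borel_measurable M"
    unfolding measurable_cong_sets[OF sets_eq refl]
    by (rule borel_measurable_continuous_on_restrict[OF continuous])
  show "Inf (f ` \<Omega>) \<le> f x \<and> f x \<le> Sup (f ` \<Omega>)" if "x \<in> space M" for x
    using that f_bdd by (auto simp: space_eq intro: cInf_lower cSup_upper)
  obtain x where "x \<in> \<Omega>" using nonempty by blast
  from measure_support_preimage_pos[OF support continuous this open_UNIV]
  show "0 < measure M (space M)"
    using finite by (simp add: space_eq finite_measure.emeasure_eq_measure)
qed

lemma mass_near_Inf:
  assumes "0 < \<delta>"
  shows "0 < emeasure M {x \<in> space M. f x < Inf (f ` \<Omega>) + \<delta>}"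
proof -
  obtain x where "x \<in> \<Omega>" "f x = Inf (f ` \<Omega>)" using Inf_attained by blast
  with assms show ?thesis
    using measure_support_preimage_pos[OF support continuous \<open>x \<in> \<Omega>\<close>, of "{..< Inf (f ` \<Omega>) + \<delta>}"]
    by (simp add: space_eq)
qed

lemma mass_near_Sup:
  assumes "0 < \<delta>"
  shows "0 < emeasure M {x \<in> space M. Sup (f ` \<Omega>) - \<delta> < f x}"
proof -
  obtain x where "x \<in> \<Omega>" "f x = Sup (f ` \<Omega>)" using Sup_attained by blast
  with assms show ?thesis
    using measure_support_preimage_pos[OF support continuous \<open>x \<in> \<Omega>\<close>, of "{Sup (f ` \<Omega>) - \<delta> <..}"]
    by (simp add: space_eq)
qed

lemma hankel0_pos:
  assumes "infinite (f ` \<Omega>) \<or> r < card (f ` \<Omega>)" and "\<exists>i<r + 1. v i \<noteq> 0"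
  shows "0 < matrix_form (r + 1) (hankel0 (push_moment M f)) v v"
proof (rule hankel0_form_pos)
  have "infinite (f ` \<Omega>) \<or> r + 1 \<le> card (f ` \<Omega>)" using assms(1) by auto
  from exists_nonzero_poly_value[OF assms(2) this]
  obtain s where "s \<in> f ` \<Omega>" "(\<Sum>i<r + 1. v i * s ^ i) \<noteq> 0" by blast
  then obtain x where "x \<in> \<Omega>" "(\<Sum>i<r + 1. v i * f x ^ i) \<noteq> 0" by blast
  have "continuous_on \<Omega> (\<lambda>y. \<Sum>i<r + 1. v i * f y ^ i)"
    by (intro continuous_intros continuous)
  from measure_support_preimage_pos[OF support this \<open>x \<in> \<Omega>\<close> open_Compl[OF closed_singleton]]
  show "0 < emeasure M {x \<in> space M. (\<Sum>i<r + 1. v i * f x ^ i) \<noteq> 0}"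
    using \<open>(\<Sum>i<r + 1. v i * f x ^ i) \<noteq> 0\<close> by (simp add: space_eq)
qed


lemma tau_lower_eq_gen_eig_min:
  assumes "infinite (f ` \<Omega>) \<or> r < card (f ` \<Omega>)"
  shows "tau_lower (push_moment M f) r =
    gen_eig_min (r + 1) (hankel1 (push_moment M f)) (hankel0 (push_moment M f))"
  unfolding tau_lower_def
  by (rule Sup_psd_pencil_eq_gen_eig_min[OF _ hankel1_sym hankel0_sym hankel0_pos[OF assms]]) simp

lemma tau_upper_eq_gen_eig_max:
  assumes "infinite (f ` \<Omega>) \<or> r < card (f ` \<Omega>)"
  shows "tau_upper (push_moment M f) r =
    gen_eig_max (r + 1) (hankel1 (push_moment M f)) (hankel0 (push_moment M f))"
  unfolding tau_upper_def
  by (rule Inf_psd_pencil_eq_gen_eig_max[OF _ hankel1_sym hankel0_sym hankel0_pos[OF assms]]) simp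
end

theorem theorem2p3:
  fixes \<Omega> :: "'a::euclidean_space set" and f :: "'a \<Rightarrow> real" and M :: "'a measure"
  assumes "compact \<Omega>" and "interior \<Omega> \<noteq> {}"
    and "continuous_on \<Omega> f"
    and "space M = \<Omega>" and "sets M = sets (restrict_space borel \<Omega>)"
    and "finite_measure M"
    and "measure_support M \<Omega> = \<Omega>"
  shows "(\<forall>r. Inf (f ` \<Omega>) \<le> tau_lower (push_moment M f) r
              \<and> tau_lower (push_moment M f) r \<le> tau_upper (push_moment M f) r
              \<and> tau_upper (push_moment M f) r \<le> Sup (f ` \<Omega>))
       \<and> decseq (tau_lower (push_moment M f))
       \<and> incseq (tau_upper (push_moment M f))
       \<and> tau_lower (push_moment M f) \<longlonglongrightarrow> Inf (f ` \<Omega>)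
       \<and> tau_upper (push_moment M f) \<longlonglongrightarrow> Sup (f ` \<Omega>)
       \<and> (\<forall>r. (infinite (f ` \<Omega>) \<or> r < card (f ` \<Omega>)) \<longrightarrow>
            tau_lower (push_moment M f) r =
              gen_eig_min (r + 1) (hankel1 (push_moment M f)) (hankel0 (push_moment M f))
          \<and> tau_upper (push_moment M f) r =
              gen_eig_max (r + 1) (hankel1 (push_moment M f)) (hankel0 (push_moment M f)))"
proof -
  \<comment> \<open>The interior hypothesis is only needed to know that \<open>\<Omega>\<close> is nonempty.\<close>
  have "\<Omega> \<noteq> {}" using assms(2) interior_subset by blast
  interpret compact_support_moments \<Omega> f M
    using assms(1) \<open>\<Omega> \<noteq> {}\<close> assms(3-7) by (rule compact_support_moments.intro)
  have lim_lower: "tau_lower (push_moment M f) \<longlonglongrightarrow> Inf (f ` \<Omega>)"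
    by (rule tau_lower_tendsto[OF mass_near_Inf])
  have lim_upper: "tau_upper (push_moment M f) \<longlonglongrightarrow> Sup (f ` \<Omega>)"
    by (rule tau_upper_tendsto[OF mass_near_Sup])
  show ?thesis
    using tau_lower_ge tau_lower_le_tau_upper tau_upper_le tau_lower_decseq tau_upper_incseq
      lim_lower lim_upper tau_lower_eq_gen_eig_min tau_upper_eq_gen_eig_max
    by blast
qed

end
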